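(* Let $m,n,a,d\in\mathbb{N}$. Let $X_1,\dots,X_m$ be i.i.d. random variables uniformly distributed on $\{1,2,\dots,a\}$ and $Y_1,\dots,Y_n$ i.i.d. random variables uniformly distributed on $\{1,2,\dots,d\}$, independent of the $X_i$. Let $X^{(1)}$ denote the largest of $X_1,\dots,X_m$ and $Y^{(1)}$ the largest of $Y_1,\dots,Y_n$. Then \[ \Pr\left(X^{(1)}>Y^{(1)}\right)=\sum_{y=1}^{\min\{a,d\}}\frac{(a^m-y^m)(y^n-(y-1)^n)}{a^{m}d^{n}}. \]
   Context: The $X_i$ are the faces shown by $m$ attacker dice with $a$ sides and the $Y_j$ the faces of $n$ defender dice with $d$ sides. In the paper's notation, the event $X^{(1)}>Y^{(1)}$ is written $\{X_i\}_m>_{1,1}\{Y_j\}_n$ (exactly one of the one comparison $X^{(1)}>Y^{(1)}$ holds; ties go to the defender). *)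

theory Defs
  imports "HOL-Probability.Probability"
begin

definition dice_pmf :: "nat \<Rightarrow> nat \<Rightarrow> (nat \<Rightarrow> nat) pmf" where
  "dice_pmf k s = Pi_pmf {..<k} 0 (\<lambda>_. pmf_of_set {1..s})"

end

theory Submission
  imports Defs
begin

text \<open>The largest of \<open>k\<close> faces of an \<open>s\<close>-sided die is \<open>\<le> t\<close> iff every face is, so its
  distribution function is \<open>(min t s / s)^k\<close>; differencing gives its point masses. Since the two
  maxima are independent, conditioning on the defender's maximum \<open>y\<close> gives
  \<open>P(max X > max Y) = \<Sum>\<^sub>y P(max Y = y) (1 - (min y a / a)^m)\<close>, and the terms with \<open>y > a\<close> vanish.\<close>

definition max_face_pmf :: "nat \<Rightarrow> nat \<Rightarrow> nat pmf" where
  "max_face_pmf k s = map_pmf (\<lambda>X. Max (X ` {..<k})) (dice_pmf k s)"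

lemma prob_pair_pmf_less:
  fixes U V :: "'a::{linorder, countable} pmf"
  assumes "finite S" "set_pmf V \<subseteq> S"
  shows "measure_pmf.prob (pair_pmf U V) {(u, v). v < u}
         = (\<Sum>v\<in>S. measure_pmf.prob U {v<..} * pmf V v)"
proof -
  let ?P = "pair_pmf U V"
  have "measure_pmf.prob ?P {(u, v). v < u} = measure_pmf.prob ?P ({(u, v). v < u} \<inter> set_pmf ?P)"
    by (rule measure_Int_set_pmf[symmetric])
  also have "{(u, v). v < u} \<inter> set_pmf ?P = (\<Union>v\<in>S. {v<..} \<times> {v}) \<inter> set_pmf ?P"
    using assms(2) by auto
  also have "measure_pmf.prob ?P \<dots> = measure_pmf.prob ?P (\<Union>v\<in>S. {v<..} \<times> {v})"
    by (rule measure_Int_set_pmf)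
  also have "\<dots> = (\<Sum>v\<in>S. measure_pmf.prob ?P ({v<..} \<times> {v}))"
    by (rule measure_pmf.finite_measure_finite_Union) (auto simp: assms(1) disjoint_family_on_def)
  also have "\<dots> = (\<Sum>v\<in>S. measure_pmf.prob U {v<..} * pmf V v)"
    by (simp add: measure_pmf_prob_product measure_pmf_single)
  finally show ?thesis .
qed

lemma prob_max_face_atMost:
  assumes "k \<ge> 1" "s \<ge> 1"
  shows "measure_pmf.prob (max_face_pmf k s) {..t} = real (min t s) ^ k / real s ^ k"
proof -
  have ne: "{..<k} \<noteq> {}" using assms(1) by (simp add: lessThan_empty_iff)
  have "(\<lambda>X. Max (X ` {..<k})) -` {..t} = Pi {..<k} (\<lambda>_. {..t})"
    by (auto simp: Pi_def Max_le_iff[OF finite_imageI[OF finite_lessThan]] ne)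
  then have "measure_pmf.prob (max_face_pmf k s) {..t}
      = (\<Prod>i\<in>{..<k}. measure_pmf.prob (pmf_of_set {1..s}) {..t})"
    by (simp add: max_face_pmf_def dice_pmf_def measure_Pi_pmf_Pi)
  also have "measure_pmf.prob (pmf_of_set {1..s}) {..t} = real (min t s) / real s"
  proof -
    have "{1..s} \<inter> {..t} = {1..min t s}" by auto
    then show ?thesis using assms(2) by (simp add: measure_pmf_of_set)
  qed
  finally show ?thesis by (simp add: power_divide)
qed

lemma prob_max_face_greaterThan:
  assumes "k \<ge> 1" "s \<ge> 1"
  shows "measure_pmf.prob (max_face_pmf k s) {t<..} = 1 - real (min t s) ^ k / real s ^ k"
proof -
  have "{t<..} = space (measure_pmf (max_face_pmf k s)) - {..t}" by auto
  then show ?thesis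
    using measure_pmf.prob_compl[of "{..t}" "max_face_pmf k s"]
    by (simp add: prob_max_face_atMost[OF assms])
qed

lemma pmf_max_face:
  assumes "k \<ge> 1" "s \<ge> 1" "t \<ge> 1"
  shows "pmf (max_face_pmf k s) t = (real (min t s) ^ k - real (min (t - 1) s) ^ k) / real s ^ k"
proof -
  let ?M = "max_face_pmf k s"
  have "{..t} = {..t - 1} \<union> {t}" using assms(3) by auto
  then have "measure_pmf.prob ?M {..t} = measure_pmf.prob ?M {..t - 1} + pmf ?M t"
    using assms(3) measure_pmf.finite_measure_Union[of "{..t - 1}" ?M "{t}"]
    by (simp add: measure_pmf_single)
  then show ?thesis by (simp add: prob_max_face_atMost[OF assms(1,2)] diff_divide_distrib)
qed

lemma set_pmf_max_face:
  assumes "k \<ge> 1" "s \<ge> 1"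
  shows "set_pmf (max_face_pmf k s) \<subseteq> {1..s}"
proof -
  have "pmf (max_face_pmf k s) t = 0" if "t \<notin> {1..s}" for t
  proof (cases "t = 0")
    case True
    then show ?thesis
      using prob_max_face_atMost[OF assms, of 0] assms by (simp add: measure_pmf_single[symmetric])
  next
    case False
    then show ?thesis using that assms by (simp add: pmf_max_face)
  qed
  then show ?thesis by (metis subsetI set_pmf_iff)
qed

theorem proposition6p1:
  fixes m n a d :: nat
  assumes "m \<ge> 1" and "n \<ge> 1" and "a \<ge> 1" and "d \<ge> 1"
  shows "measure_pmf.prob (pair_pmf (dice_pmf m a) (dice_pmf n d))
           {(X, Y). Max (X ` {..<m}) > Max (Y ` {..<n})}
         = (\<Sum>y = 1..min a d. (real a ^ m - real y ^ m) * (real y ^ n - (real y - 1) ^ n)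
                                / (real a ^ m * real d ^ n))"
proof -
  have "measure_pmf.prob (pair_pmf (dice_pmf m a) (dice_pmf n d))
           {(X, Y). Max (X ` {..<m}) > Max (Y ` {..<n})}
      = measure_pmf.prob (pair_pmf (max_face_pmf m a) (max_face_pmf n d)) {(u, v). v < u}"
    by (simp add: max_face_pmf_def map_pair[symmetric] vimage_def case_prod_unfold)
  also have "\<dots> = (\<Sum>y = 1..d. (1 - real (min y a) ^ m / real a ^ m)
                              * ((real y ^ n - (real y - 1) ^ n) / real d ^ n))"
    using assms
    by (auto simp: prob_pair_pmf_less[OF _ set_pmf_max_face] prob_max_face_greaterThan
                   pmf_max_face of_nat_diff intro!: sum.cong)
  also have "\<dots> = (\<Sum>y = 1..min a d. (real a ^ m - real y ^ m) * (real y ^ n - (real y - 1) ^ n)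
                                / (real a ^ m * real d ^ n))"
    using assms
    by (intro sum.mono_neutral_cong_right) (auto simp: field_simps)
  finally show ?thesis .
qed

end
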